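(* A topological group $X$ is Choquet if and only if its Raikov completion $\bar X$ is Choquet and $X$ is $G_\delta$-dense in $\bar X$.
   Context: Topological groups are assumed Hausdorff; the Raikov completion $\bar X$ of $X$ is its completion with respect to the two-sided uniformity, a complete topological group containing $X$ as a dense subgroup. The Choquet game $\mathsf{G}_{EN}(X)$ on a topological space $X$ is played by players $\mathsf E$ and $\mathsf N$: $\mathsf E$ starts by choosing a non-empty open set $U_0\subset X$, $\mathsf N$ responds with a non-empty open $U_1\subset U_0$, and at the $n$-th inning $\mathsf E$ chooses a non-empty open $U_{2n}\subset U_{2n-1}$ and $\mathsf N$ responds with a non-empty open $U_{2n+1}\subset U_{2n}$. Player $\mathsf E$ wins if $\bigcap_{n\in\omega}U_n=\emptyset$; otherwise $\mathsf N$ wins. A topological space $X$ is Choquet if player $\mathsf N$ has a winning strategy in $\mathsf{G}_{EN}(X)$. A subset $A$ of a topological space $Y$ is $G_\delta$-dense in $Y$ if $A$ meets every non-empty $G_\delta$-subset of $Y$. *)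

theory Defs
  imports "HOL-Analysis.Analysis" "HOL-Algebra.Group"
begin

definition topological_group :: "('a, 'm) monoid_scheme \<Rightarrow> 'a topology \<Rightarrow> bool" where
  "topological_group G T \<longleftrightarrow>
     group G \<and> topspace T = carrier G \<and> Hausdorff_space T \<and>
     continuous_map (prod_topology T T) T (\<lambda>(x, y). x \<otimes>\<^bsub>G\<^esub> y) \<and>
     continuous_map T T (\<lambda>x. inv\<^bsub>G\<^esub> x)"

text \<open>Cauchy filters for the two-sided uniformity of a topological group: its basic entourages
  are {(x,y). x^-1 y \<in> U and y x^-1 \<in> U} for U an open neighbourhood of the identity.\<close>
definition two_sided_cauchy :: "('a, 'm) monoid_scheme \<Rightarrow> 'a topology \<Rightarrow> 'a filter \<Rightarrow> bool" where
  "two_sided_cauchy G T F \<longleftrightarrow>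
     (\<forall>U. openin T U \<and> \<one>\<^bsub>G\<^esub> \<in> U \<longrightarrow>
        eventually (\<lambda>(x, y). inv\<^bsub>G\<^esub> x \<otimes>\<^bsub>G\<^esub> y \<in> U \<and> y \<otimes>\<^bsub>G\<^esub> inv\<^bsub>G\<^esub> x \<in> U) (F \<times>\<^sub>F F))"

definition raikov_complete :: "('a, 'm) monoid_scheme \<Rightarrow> 'a topology \<Rightarrow> bool" where
  "raikov_complete G T \<longleftrightarrow>
     (\<forall>F. F \<noteq> bot \<and> eventually (\<lambda>x. x \<in> carrier G) F \<and> two_sided_cauchy G T F
          \<longrightarrow> (\<exists>x. limitin T id x F))"

text \<open>(H, S) together with e is a Raikov completion of (G, T): H is a Raikov complete
  topological group and e is a group homomorphism and topological embedding of G onto a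
  dense subgroup of H.  (The Raikov completion is unique up to isomorphism.)\<close>
definition raikov_completion ::
  "('a, 'm) monoid_scheme \<Rightarrow> 'a topology \<Rightarrow> ('b, 'n) monoid_scheme \<Rightarrow> 'b topology \<Rightarrow> ('a \<Rightarrow> 'b) \<Rightarrow> bool" where
  "raikov_completion G T H S e \<longleftrightarrow>
     topological_group H S \<and> raikov_complete H S \<and>
     e \<in> hom G H \<and> embedding_map T S e \<and> S closure_of (e ` carrier G) = topspace S"

text \<open>A position (partial play) of the Choquet game in which N follows strategy \<sigma>:
  moves U 0, ..., U (2n) where all E moves U (2k), k \<le> n, are legal and all N moves
  U (2k+1), k < n, are given by \<sigma> applied to the history so far.\<close>
definition choquet_play :: "'a topology \<Rightarrow> ('a set list \<Rightarrow> 'a set) \<Rightarrow> (nat \<Rightarrow> 'a set) \<Rightarrow> nat \<Rightarrow> bool" where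
  "choquet_play T \<sigma> U n \<longleftrightarrow>
     (\<forall>k\<le>n. openin T (U (2*k)) \<and> U (2*k) \<noteq> {} \<and> (k > 0 \<longrightarrow> U (2*k) \<subseteq> U (2*k - 1)) \<and>
            (k < n \<longrightarrow> U (2*k+1) = \<sigma> (map U [0..<2*k+1])))"

definition choquet_space :: "'a topology \<Rightarrow> bool" where
  "choquet_space T \<longleftrightarrow>
     (\<exists>\<sigma>. (\<forall>U n. choquet_play T \<sigma> U n \<longrightarrow>
              openin T (\<sigma> (map U [0..<2*n+1])) \<and> \<sigma> (map U [0..<2*n+1]) \<noteq> {} \<and>
              \<sigma> (map U [0..<2*n+1]) \<subseteq> U (2*n)) \<and>
          (\<forall>U. (\<forall>n. choquet_play T \<sigma> U n) \<longrightarrow> \<Inter> (range U) \<noteq> {}))"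

definition gdelta_dense :: "'a topology \<Rightarrow> 'a set \<Rightarrow> bool" where
  "gdelta_dense T A \<longleftrightarrow> (\<forall>B. gdelta_in T B \<and> B \<noteq> {} \<longrightarrow> A \<inter> B \<noteq> {})"

end

theory Submission
  imports Defs
begin

text \<open>
  Write \<open>Y\<close> for the completion of \<open>X\<close>. A winning strategy of N in \<open>X\<close> is transported to
  \<open>Y\<close> by extending each answer to an open set of \<open>Y\<close> and intersecting it with the last move of
  E: the traces on \<open>X\<close> of a play in \<open>Y\<close> then form a play in \<open>X\<close>, so every outcome in \<open>Y\<close>
  meets \<open>X\<close>. Conversely, N plays in \<open>X\<close> by running a winning strategy of \<open>Y\<close> against open
  extensions of the moves of E; the outcome in \<open>Y\<close> is a non-empty \<open>G\<^sub>\<delta>\<close> set, so it meets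
  \<open>X\<close> if \<open>X\<close> is \<open>G\<^sub>\<delta>\<close>-dense, and its trace on \<open>X\<close> is the outcome in \<open>X\<close>.

  For \<open>G\<^sub>\<delta>\<close>-density, let \<open>b \<in> \<Inter>\<^sub>n C\<^sub>n\<close> and choose neighbourhoods \<open>W\<^sub>n\<close> of the
  identity with \<open>b W\<^sub>n\<inverse> W\<^sub>n \<subseteq> C\<^sub>n\<close>. Two plays \<open>P\<close> and \<open>Q\<close> in \<open>Y\<close> are run in
  parallel, \<open>Q\<close> being the right translate of \<open>P\<close> by \<open>b\<inverse>\<close>, while the \<open>n\<close>-th move of E in
  \<open>P\<close> is shrunk into a translate of \<open>W\<^sub>n\<close>. Points \<open>p, d \<in> X\<close> of the two outcomes give
  \<open>d\<inverse> p \<in> X \<inter> \<Inter>\<^sub>n C\<^sub>n\<close>.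
\<close>

section \<open>The Choquet game\<close>

definition choquet_strategy :: "'a topology \<Rightarrow> ('a set list \<Rightarrow> 'a set) \<Rightarrow> bool" where
  "choquet_strategy T \<sigma> \<longleftrightarrow> (\<forall>U n. choquet_play T \<sigma> U n \<longrightarrow>
     openin T (\<sigma> (map U [0..<2*n+1])) \<and> \<sigma> (map U [0..<2*n+1]) \<noteq> {} \<and>
     \<sigma> (map U [0..<2*n+1]) \<subseteq> U (2*n))"

lemma choquet_space_iff_strategy:
  "choquet_space T \<longleftrightarrow>
     (\<exists>\<sigma>. choquet_strategy T \<sigma> \<and> (\<forall>U. (\<forall>n. choquet_play T \<sigma> U n) \<longrightarrow> \<Inter> (range U) \<noteq> {}))"
  unfolding choquet_space_def choquet_strategy_def by blast

lemma choquet_strategyD: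
  assumes "choquet_strategy T \<sigma>" "choquet_play T \<sigma> U n"
  shows "openin T (\<sigma> (map U [0..<2*n+1]))" "\<sigma> (map U [0..<2*n+1]) \<noteq> {}"
    "\<sigma> (map U [0..<2*n+1]) \<subseteq> U (2*n)"
  using assms unfolding choquet_strategy_def by blast+

lemma choquet_play_0: "choquet_play T \<sigma> U 0 \<longleftrightarrow> openin T (U 0) \<and> U 0 \<noteq> {}"
  unfolding choquet_play_def by simp

lemma choquet_play_Suc:
  "choquet_play T \<sigma> U (Suc n) \<longleftrightarrow> choquet_play T \<sigma> U n \<and>
     U (2*n+1) = \<sigma> (map U [0..<2*n+1]) \<and>
     openin T (U (2*n+2)) \<and> U (2*n+2) \<noteq> {} \<and> U (2*n+2) \<subseteq> U (2*n+1)"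
    (is "?lhs \<longleftrightarrow> _ \<and> ?step")
proof
  assume play: ?lhs
  have "choquet_play T \<sigma> U n"
    using play unfolding choquet_play_def by simp
  moreover have ?step
    using play[unfolded choquet_play_def, rule_format, of n]
      play[unfolded choquet_play_def, rule_format, of "Suc n"] by simp
  ultimately show "choquet_play T \<sigma> U n \<and> ?step" by blast
next
  assume "choquet_play T \<sigma> U n \<and> ?step"
  then show ?lhs
    unfolding choquet_play_def by (auto simp: le_Suc_eq less_Suc_eq simp del: upt_Suc)
qed

lemma choquet_play_infinite_openin:
  assumes "choquet_strategy T \<sigma>" "\<forall>n. choquet_play T \<sigma> U n"
  shows "openin T (U i)"
proof (cases "even i")
  case True
  then obtain k where "i = 2*k" by blast
  then show ?thesis using assms(2) unfolding choquet_play_def by blast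
next
  case False
  then obtain k where "i = 2*k+1" using oddE by blast
  then show ?thesis using assms choquet_play_Suc[of T \<sigma> U k] choquet_strategyD(1) by metis
qed

lemma choquet_play_infinite_decseq:
  assumes "choquet_strategy T \<sigma>" "\<forall>n. choquet_play T \<sigma> U n"
  shows "decseq U"
proof (rule decseq_SucI)
  fix i
  show "U (Suc i) \<subseteq> U i"
  proof (cases "even i")
    case True
    then obtain k where "i = 2*k" by blast
    then show ?thesis
      using assms(2) choquet_play_Suc[of T \<sigma> U k] choquet_strategyD(3)[OF assms(1), of U k]
      by (simp del: upt_Suc)
  next
    case False
    then obtain k where "i = 2*k+1" using oddE by blast
    then show ?thesis using assms(2) choquet_play_Suc[of T \<sigma> U k] by auto
  qed
qed

primrec choquet_run :: "('a set list \<Rightarrow> 'a set) \<Rightarrow> ('a set list \<Rightarrow> 'a set) \<Rightarrow> nat \<Rightarrow> 'a set list" where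
  "choquet_run \<tau> \<sigma> 0 = []"
| "choquet_run \<tau> \<sigma> (Suc n) =
     choquet_run \<tau> \<sigma> n @ [(if even n then \<tau> else \<sigma>) (choquet_run \<tau> \<sigma> n)]"

definition choquet_run_seq :: "('a set list \<Rightarrow> 'a set) \<Rightarrow> ('a set list \<Rightarrow> 'a set) \<Rightarrow> nat \<Rightarrow> 'a set" where
  "choquet_run_seq \<tau> \<sigma> n = (if even n then \<tau> else \<sigma>) (choquet_run \<tau> \<sigma> n)"

lemma length_choquet_run [simp]: "length (choquet_run \<tau> \<sigma> n) = n"
  by (induction n) simp_all

lemma choquet_run_eq_map: "choquet_run \<tau> \<sigma> n = map (choquet_run_seq \<tau> \<sigma>) [0..<n]"
  by (induction n) (simp_all add: choquet_run_seq_def)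

lemma choquet_run_seq_even: "choquet_run_seq \<tau> \<sigma> (2*k) = \<tau> (map (choquet_run_seq \<tau> \<sigma>) [0..<2*k])"
  by (simp add: choquet_run_seq_def choquet_run_eq_map)

lemma choquet_run_seq_odd:
  "choquet_run_seq \<tau> \<sigma> (2*k+1) = \<sigma> (map (choquet_run_seq \<tau> \<sigma>) [0..<2*k+1])"
  by (simp add: choquet_run_seq_def choquet_run_eq_map)

lemma choquet_run_cong:
  assumes "\<And>hs. length hs < n \<Longrightarrow> even (length hs) \<Longrightarrow> \<tau> hs = \<tau>' hs"
  shows "choquet_run \<tau> \<sigma> n = choquet_run \<tau>' \<sigma> n"
  using assms by (induction n) simp_all

lemma choquet_run_seq_cong:
  assumes "\<And>hs. length hs \<le> n \<Longrightarrow> even (length hs) \<Longrightarrow> \<tau> hs = \<tau>' hs"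
  shows "choquet_run_seq \<tau> \<sigma> n = choquet_run_seq \<tau>' \<sigma> n"
  using assms choquet_run_cong[of n \<tau> \<tau>' \<sigma>] by (simp add: choquet_run_seq_def)

text \<open>The moves of E in \<open>Q\<close> are read off the moves of N in \<open>P\<close> and vice versa, so both
  runs come out of a single recursion on \<open>P\<close>.\<close>

lemma choquet_interleaved_runs:
  fixes P\<^sub>0 :: "'a set" and \<rho> :: "'a set list \<Rightarrow> 'a set"
    and f :: "'a set \<Rightarrow> 'a set" and g :: "nat \<Rightarrow> 'a set \<Rightarrow> 'a set"
  obtains P Q where "P 0 = P\<^sub>0" "\<And>k. P (2*k+1) = \<rho> (map P [0..<2*k+1])"
    "\<And>k. Q (2*k) = f (P (2*k+1))" "\<And>k. Q (2*k+1) = \<rho> (map Q [0..<2*k+1])"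
    "\<And>k. P (2*k+2) = g k (Q (2*k+1))"
proof -
  define Q_of where "Q_of P = choquet_run_seq (\<lambda>qs. f (P (Suc (length qs)))) \<rho>" for P
  define \<tau> where "\<tau> hs = (if hs = [] then P\<^sub>0
      else g (length hs div 2 - 1) (Q_of ((!) hs) (length hs - 1)))" for hs
  define P where "P = choquet_run_seq \<tau> \<rho>"
  define Q where "Q = Q_of P"
  have P_0: "P 0 = P\<^sub>0"
    using choquet_run_seq_even[of \<tau> \<rho> 0] unfolding P_def \<tau>_def by simp
  have P_odd: "P (2*k+1) = \<rho> (map P [0..<2*k+1])" for k
    unfolding P_def by (rule choquet_run_seq_odd)
  have Q_even: "Q (2*k) = f (P (2*k+1))" for k
    using choquet_run_seq_even[of _ \<rho> k] unfolding Q_def Q_of_def by simp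
  have Q_odd: "Q (2*k+1) = \<rho> (map Q [0..<2*k+1])" for k
    unfolding Q_def Q_of_def by (rule choquet_run_seq_odd)
  have P_even: "P (2*k+2) = g k (Q (2*k+1))" for k
  proof -
    have "f (map P [0..<2*k+2] ! Suc (length qs)) = f (P (Suc (length qs)))"
      if "length qs \<le> 2*k+1" "even (length qs)" for qs :: "'a set list"
    proof -
      have "Suc (length qs) < 2*k+2" using that by presburger
      then show ?thesis by (simp del: upt_Suc)
    qed
    then have "Q_of ((!) (map P [0..<2*k+2])) (2*k+1) = Q (2*k+1)"
      unfolding Q_of_def Q_def by (rule choquet_run_seq_cong)
    then show ?thesis
      using choquet_run_seq_even[of \<tau> \<rho> "Suc k"] unfolding P_def[symmetric] \<tau>_def
      by (simp del: upt_Suc)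
  qed
  show thesis
    by (rule that[OF P_0 P_odd Q_even Q_odd P_even])
qed

lemma choquet_twin_plays:
  assumes \<rho>: "choquet_strategy T \<rho>" and P\<^sub>0: "openin T P\<^sub>0" "P\<^sub>0 \<noteq> {}"
    and f: "\<And>B. openin T B \<Longrightarrow> B \<noteq> {} \<Longrightarrow> openin T (f B) \<and> f B \<noteq> {}"
    and g: "\<And>k A. openin T A \<Longrightarrow> A \<noteq> {} \<Longrightarrow> openin T (g k A) \<and> g k A \<noteq> {}"
    and g_f: "\<And>k A B. openin T B \<Longrightarrow> A \<subseteq> f B \<Longrightarrow> g k A \<subseteq> B"
    and f_g: "\<And>k A B. openin T A \<Longrightarrow> B \<subseteq> g k A \<Longrightarrow> f B \<subseteq> A"
  obtains P Q where "\<forall>n. choquet_play T \<rho> P n" "\<forall>n. choquet_play T \<rho> Q n"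
    "\<forall>k. Q (2*k) = f (P (2*k+1))" "\<forall>k. P (2*k+2) = g k (Q (2*k+1))"
proof -
  obtain P Q where P_0: "P 0 = P\<^sub>0" and P_odd: "\<And>k. P (2*k+1) = \<rho> (map P [0..<2*k+1])"
    and Q_even: "\<And>k. Q (2*k) = f (P (2*k+1))" and Q_odd: "\<And>k. Q (2*k+1) = \<rho> (map Q [0..<2*k+1])"
    and P_even: "\<And>k. P (2*k+2) = g k (Q (2*k+1))"
    using choquet_interleaved_runs[of P\<^sub>0 \<rho> f g] by blast
  have "choquet_play T \<rho> P n \<and> choquet_play T \<rho> Q n" for n
  proof (induction n)
    case 0
    have P: "choquet_play T \<rho> P 0"
      unfolding choquet_play_0 P_0 using P\<^sub>0 ..
    then have "choquet_play T \<rho> Q 0"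
      using choquet_strategyD[OF \<rho> P, folded P_odd] Q_even[of 0] f unfolding choquet_play_0 by simp
    with P show ?case ..
  next
    case (Suc n)
    then have P: "choquet_play T \<rho> P n" and Q: "choquet_play T \<rho> Q n" by auto
    note LP = choquet_strategyD[OF \<rho> P, folded P_odd]
    note LQ = choquet_strategyD[OF \<rho> Q, folded Q_odd]
    have "P (2*n+2) \<subseteq> P (2*n+1)"
      unfolding P_even using g_f[OF LP(1)] LQ(3) Q_even by simp
    then have P': "choquet_play T \<rho> P (Suc n)"
      unfolding choquet_play_Suc P_even using P P_odd g[OF LQ(1,2)] by simp
    note LP' = choquet_strategyD[OF \<rho> P', folded P_odd]
    have "Q (2*n+2) \<subseteq> Q (2*n+1)"
      using f_g[OF LQ(1)] LP'(3) P_even Q_even[of "Suc n"] by simp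
    then have "choquet_play T \<rho> Q (Suc n)"
      unfolding choquet_play_Suc using Q Q_odd Q_even[of "Suc n"] f[OF LP'(1,2)] by simp
    with P' show ?case ..
  qed
  then show thesis
    using that Q_even P_even by blast
qed

section \<open>Topological groups\<close>

lemma topological_groupD:
  assumes "topological_group G T"
  shows "group G" "topspace T = carrier G"
    "continuous_map (prod_topology T T) T (\<lambda>(x, y). x \<otimes>\<^bsub>G\<^esub> y)"
    "continuous_map T T (\<lambda>x. inv\<^bsub>G\<^esub> x)"
  using assms unfolding topological_group_def by auto

context
  fixes G :: "('a, 'm) monoid_scheme" (structure) and T :: "'a topology"
  assumes tg: "topological_group G T"
begin

interpretation group G
  using topological_groupD(1)[OF tg] .

lemma topological_group_continuous_mult_left:
  "z \<in> carrier G \<Longrightarrow> continuous_map T T (\<lambda>v. z \<otimes> v)"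
  using continuous_map_compose[OF continuous_map_pairedI[OF continuous_map_const[THEN iffD2]
        continuous_map_id] topological_groupD(3)[OF tg]] topological_groupD(2)[OF tg]
  by (simp add: o_def)

lemma topological_group_continuous_mult_right:
  "z \<in> carrier G \<Longrightarrow> continuous_map T T (\<lambda>v. v \<otimes> z)"
  using continuous_map_compose[OF continuous_map_pairedI[OF continuous_map_id
        continuous_map_const[THEN iffD2]] topological_groupD(3)[OF tg]] topological_groupD(2)[OF tg]
  by (simp add: o_def)

lemma topological_group_openin_mult_left:
  assumes "z \<in> carrier G" "openin T A"
  shows "openin T ((\<lambda>v. z \<otimes> v) ` A)"
proof -
  have "homeomorphic_maps T T (\<lambda>v. z \<otimes> v) (\<lambda>v. inv z \<otimes> v)"
    using assms(1) topological_group_continuous_mult_left topological_groupD(2)[OF tg]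
    by (simp add: homeomorphic_maps_def m_assoc[symmetric])
  then show ?thesis
    using assms(2) homeomorphic_imp_open_map homeomorphic_map_maps open_map_def by blast
qed

lemma topological_group_openin_mult_right:
  assumes "z \<in> carrier G" "openin T A"
  shows "openin T ((\<lambda>v. v \<otimes> z) ` A)"
proof -
  have "homeomorphic_maps T T (\<lambda>v. v \<otimes> z) (\<lambda>v. v \<otimes> inv z)"
    using assms(1) topological_group_continuous_mult_right topological_groupD(2)[OF tg]
    by (simp add: homeomorphic_maps_def m_assoc)
  then show ?thesis
    using assms(2) homeomorphic_imp_open_map homeomorphic_map_maps open_map_def by blast
qed

lemma topological_group_nhds_inv_mult:
  assumes "openin T N" "\<one> \<in> N"
  obtains W where "openin T W" "\<one> \<in> W" "\<And>u v. u \<in> W \<Longrightarrow> v \<in> W \<Longrightarrow> inv u \<otimes> v \<in> N"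
proof -
  have "continuous_map (prod_topology T T) T (\<lambda>p. inv (fst p) \<otimes> snd p)"
    using continuous_map_compose[OF continuous_map_pairedI[OF
          continuous_map_compose[OF continuous_map_fst topological_groupD(4)[OF tg]]
          continuous_map_snd] topological_groupD(3)[OF tg]]
    by (simp add: o_def case_prod_beta)
  then have "openin (prod_topology T T) {p \<in> topspace (prod_topology T T). inv (fst p) \<otimes> snd p \<in> N}"
    by (rule openin_continuous_map_preimage) (rule assms(1))
  moreover have "(\<one>, \<one>) \<in> {p \<in> topspace (prod_topology T T). inv (fst p) \<otimes> snd p \<in> N}"
    using assms(2) topological_groupD(2)[OF tg] by simp
  ultimately obtain U V where "openin T U" "openin T V" "\<one> \<in> U" "\<one> \<in> V"
      "U \<times> V \<subseteq> {p \<in> topspace (prod_topology T T). inv (fst p) \<otimes> snd p \<in> N}"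
    unfolding openin_prod_topology_alt by meson
  then show thesis
    by (intro that[of "U \<inter> V"]) auto
qed

lemma topological_group_openin_Int_mult_left:
  assumes "openin T A" "z \<in> A" "openin T W" "\<one> \<in> W"
  shows "openin T (A \<inter> (\<lambda>w. z \<otimes> w) ` W)" "z \<in> A \<inter> (\<lambda>w. z \<otimes> w) ` W"
proof -
  have z: "z \<in> carrier G"
    using assms(1,2) openin_subset topological_groupD(2)[OF tg] by blast
  show "openin T (A \<inter> (\<lambda>w. z \<otimes> w) ` W)"
    using assms(1) topological_group_openin_mult_left[OF z assms(3)] by blast
  have "z \<otimes> \<one> \<in> (\<lambda>w. z \<otimes> w) ` W"
    using assms(4) by blast
  then show "z \<in> A \<inter> (\<lambda>w. z \<otimes> w) ` W"
    using assms(2) z by simp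
qed

end

lemma (in group) image_mult_right_image_mult_inv:
  "A \<subseteq> carrier G \<Longrightarrow> b \<in> carrier G \<Longrightarrow> (\<lambda>v. v \<otimes> b) ` (\<lambda>v. v \<otimes> inv b) ` A = A"
  unfolding image_image by (force simp: m_assoc)

lemma (in group) image_mult_inv_image_mult_right:
  "A \<subseteq> carrier G \<Longrightarrow> b \<in> carrier G \<Longrightarrow> (\<lambda>v. v \<otimes> inv b) ` (\<lambda>v. v \<otimes> b) ` A = A"
  unfolding image_image by (force simp: m_assoc)

lemma (in group) inv_mult_eq_of_common_left_factor:
  assumes "b \<in> carrier G" "d \<in> carrier G" "z \<in> carrier G" "u \<in> carrier G" "v \<in> carrier G"
    and "d \<otimes> b = z \<otimes> u" "p = z \<otimes> v"
  shows "inv d \<otimes> p = b \<otimes> (inv u \<otimes> v)"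
proof -
  have "inv (d \<otimes> b) \<otimes> p = inv u \<otimes> v"
    using assms unfolding assms(6,7) by (simp add: inv_mult_group m_assoc flip: m_assoc[of "inv z"])
  moreover have "p \<in> carrier G"
    using assms(3,5,7) by simp
  then have "b \<otimes> (inv (d \<otimes> b) \<otimes> p) = inv d \<otimes> p"
    using assms(1,2) by (simp add: inv_mult_group m_assoc) (simp add: m_assoc[symmetric])
  ultimately show ?thesis
    by simp
qed

lemma topological_group_choquet_twin_plays:
  fixes G :: "('a, 'm) monoid_scheme" (structure)
  assumes tg: "topological_group G T" and \<rho>: "choquet_strategy T \<rho>" and b: "b \<in> carrier G"
    and W: "\<And>n. openin T (W n)" "\<And>n. \<one> \<in> W n"
  obtains P Q where "\<forall>n. choquet_play T \<rho> P n" "\<forall>n. choquet_play T \<rho> Q n"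
    "\<And>k. Q (2*k) = (\<lambda>v. v \<otimes> inv b) ` P (2*k+1)"
    "\<And>k. \<exists>z\<in>carrier G. P (2*k+2) \<subseteq> (\<lambda>w. z \<otimes> w) ` W k"
proof -
  interpret group G
    using topological_groupD(1)[OF tg] .
  have carrier: "A \<subseteq> carrier G" if "openin T A" for A
    using openin_subset[OF that] topological_groupD(2)[OF tg] by simp
  define f where "f B = (\<lambda>v. v \<otimes> inv b) ` B" for B
  define centre where "centre A = (SOME z. z \<in> (\<lambda>v. v \<otimes> b) ` A)" for A
  define g where "g k A = (\<lambda>v. v \<otimes> b) ` A \<inter> (\<lambda>w. centre A \<otimes> w) ` W k" for k A
  have centre: "openin T ((\<lambda>v. v \<otimes> b) ` A)" "centre A \<in> (\<lambda>v. v \<otimes> b) ` A"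
    if "openin T A" "A \<noteq> {}" for A
  proof -
    show "openin T ((\<lambda>v. v \<otimes> b) ` A)"
      using topological_group_openin_mult_right[OF tg b that(1)] .
    show "centre A \<in> (\<lambda>v. v \<otimes> b) ` A"
      unfolding centre_def using that(2) by (simp add: some_in_eq)
  qed
  have f: "openin T (f B) \<and> f B \<noteq> {}" if "openin T B" "B \<noteq> {}" for B
    unfolding f_def using topological_group_openin_mult_right[OF tg _ that(1)] b that(2) by auto
  have g: "openin T (g k A) \<and> g k A \<noteq> {}" if "openin T A" "A \<noteq> {}" for k A
    using topological_group_openin_Int_mult_left[OF tg centre[OF that] W] unfolding g_def by blast
  have g_f: "g k A \<subseteq> B" if "openin T B" "A \<subseteq> f B" for k A B
    using image_mono[OF that(2), of "\<lambda>v. v \<otimes> b"] image_mult_right_image_mult_inv[OF carrier[OF that(1)] b]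
    unfolding g_def f_def by blast
  have f_g: "f B \<subseteq> A" if "openin T A" "B \<subseteq> g k A" for k A B
    using image_mult_inv_image_mult_right[OF carrier[OF that(1)] b] that(2)
    unfolding g_def f_def by blast
  have nonempty: "topspace T \<noteq> {}"
    using topological_groupD(2)[OF tg] by auto
  obtain P Q where P: "\<forall>n. choquet_play T \<rho> P n" and Q: "\<forall>n. choquet_play T \<rho> Q n"
    and Q_even: "\<forall>k. Q (2*k) = f (P (2*k+1))" and P_even: "\<forall>k. P (2*k+2) = g k (Q (2*k+1))"
    by (rule choquet_twin_plays[of T \<rho> "topspace T" f g, OF \<rho> openin_topspace nonempty f g g_f f_g])
  show thesis
  proof (rule that[OF P Q])
    show "Q (2*k) = (\<lambda>v. v \<otimes> inv b) ` P (2*k+1)" for k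
      using Q_even unfolding f_def by blast
    show "\<exists>z\<in>carrier G. P (2*k+2) \<subseteq> (\<lambda>w. z \<otimes> w) ` W k" for k
    proof
      have "Q (2*k+1) = \<rho> (map Q [0..<2*k+1])"
        using spec[OF Q, of "Suc k"] unfolding choquet_play_Suc by blast
      then have "openin T (Q (2*k+1))" "Q (2*k+1) \<noteq> {}"
        using choquet_strategyD(1,2)[OF \<rho> spec[OF Q, of k]] by simp_all
      then show "centre (Q (2*k+1)) \<in> carrier G"
        using centre carrier by blast
      show "P (2*k+2) \<subseteq> (\<lambda>w. centre (Q (2*k+1)) \<otimes> w) ` W k"
        using P_even unfolding g_def by blast
    qed
  qed
qed

lemma topological_group_nhds_seq_inv_mult:
  fixes G :: "('a, 'm) monoid_scheme" (structure) and C :: "nat \<Rightarrow> 'a set"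
  assumes tg: "topological_group G T" and b: "b \<in> carrier G"
    and C: "\<And>n. openin T (C n)" "\<And>n. b \<in> C n"
  obtains W where "\<forall>n. openin T (W n)" "\<forall>n. \<one> \<in> W n"
    "\<forall>n. \<forall>u\<in>W n. \<forall>v\<in>W n. b \<otimes> (inv u \<otimes> v) \<in> C n"
proof -
  interpret group G
    using topological_groupD(1)[OF tg] .
  define N where "N n = {v \<in> topspace T. b \<otimes> v \<in> C n}" for n
  have N: "openin T (N n)" "\<one> \<in> N n" for n
    unfolding N_def
    using openin_continuous_map_preimage[OF topological_group_continuous_mult_left[OF tg b] C(1)]
      b C(2) topological_groupD(2)[OF tg] by auto
  have "\<forall>n. \<exists>W. openin T W \<and> \<one> \<in> W \<and> (\<forall>u\<in>W. \<forall>v\<in>W. inv u \<otimes> v \<in> N n)"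
  proof
    fix n
    show "\<exists>W. openin T W \<and> \<one> \<in> W \<and> (\<forall>u\<in>W. \<forall>v\<in>W. inv u \<otimes> v \<in> N n)"
      by (rule topological_group_nhds_inv_mult[OF tg N]) blast
  qed
  from choice[OF this] obtain W
    where W: "\<forall>n. openin T (W n) \<and> \<one> \<in> W n \<and> (\<forall>u\<in>W n. \<forall>v\<in>W n. inv u \<otimes> v \<in> N n)"
    by blast
  then show thesis
    using that unfolding N_def by blast
qed

lemma topological_group_subgroup_meets_Inter:
  fixes G :: "('a, 'm) monoid_scheme" (structure) and C :: "nat \<Rightarrow> 'a set"
  assumes tg: "topological_group G T" and \<rho>: "choquet_strategy T \<rho>"
    and meet: "\<forall>V. (\<forall>n. choquet_play T \<rho> V n) \<longrightarrow> \<Inter> (range V) \<inter> D \<noteq> {}"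
    and D: "subgroup D G"
    and C: "\<And>n. openin T (C n)" "\<And>n. b \<in> C n"
  shows "D \<inter> \<Inter> (range C) \<noteq> {}"
proof -
  interpret group G
    using topological_groupD(1)[OF tg] .
  have carrier: "A \<subseteq> carrier G" if "openin T A" for A
    using openin_subset[OF that] topological_groupD(2)[OF tg] by simp
  have b: "b \<in> carrier G"
    using carrier[OF C(1)] C(2) by blast
  obtain W where "\<forall>n. openin T (W n)" "\<forall>n. \<one> \<in> W n"
    "\<forall>n. \<forall>u\<in>W n. \<forall>v\<in>W n. b \<otimes> (inv u \<otimes> v) \<in> C n"
    by (rule topological_group_nhds_seq_inv_mult[where C = C, OF tg b C(1) C(2)])
  note W = this[rule_format]
  obtain P Q where P: "\<forall>n. choquet_play T \<rho> P n" and Q: "\<forall>n. choquet_play T \<rho> Q n"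
    and QP: "\<And>k. Q (2*k) = (\<lambda>v. v \<otimes> inv b) ` P (2*k+1)"
    and small: "\<And>k. \<exists>z\<in>carrier G. P (2*k+2) \<subseteq> (\<lambda>w. z \<otimes> w) ` W k"
    by (rule topological_group_choquet_twin_plays[OF tg \<rho> b, of W, OF W(1) W(2)]) simp
  obtain p where p: "p \<in> \<Inter> (range P)" "p \<in> D"
    using meet P by blast
  obtain d where d: "d \<in> \<Inter> (range Q)" "d \<in> D"
    using meet Q by blast
  have "d \<otimes> b \<in> P (2*k+1)" for k
  proof -
    obtain v where "v \<in> P (2*k+1)" "d = v \<otimes> inv b"
      using d(1) QP[of k] by auto
    moreover have "v \<in> carrier G"
      using calculation(1) carrier[OF choquet_play_infinite_openin[OF \<rho> P]] by blast
    ultimately show ?thesis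
      using b by (simp add: m_assoc)
  qed
  then have q: "d \<otimes> b \<in> P i" for i
    using decseqD[OF choquet_play_infinite_decseq[OF \<rho> P], of i "2*i+1"] by auto
  have "inv d \<otimes> p \<in> C n" for n
  proof -
    obtain z where z: "z \<in> carrier G" "P (2*n+2) \<subseteq> (\<lambda>w. z \<otimes> w) ` W n"
      using small by blast
    have "p \<in> P (2*n+2)" "d \<otimes> b \<in> P (2*n+2)"
      using p(1) q by blast+
    then obtain u v where uv: "u \<in> W n" "v \<in> W n" "d \<otimes> b = z \<otimes> u" "p = z \<otimes> v"
      using z(2) by (meson imageE subsetD)
    have "inv d \<otimes> p = b \<otimes> (inv u \<otimes> v)"
      using b z(1) subgroup.mem_carrier[OF D d(2)] carrier[OF W(1)] uv
      by (intro inv_mult_eq_of_common_left_factor) blast+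
    then show ?thesis
      using W(3)[OF uv(1,2)] by simp
  qed
  moreover have "inv d \<otimes> p \<in> D"
    using subgroup.m_closed[OF D subgroup.m_inv_closed[OF D d(2)] p(2)] .
  ultimately show ?thesis
    by blast
qed

lemma topological_group_gdelta_dense_subgroup:
  fixes G :: "('a, 'm) monoid_scheme" (structure)
  assumes "topological_group G T" "choquet_strategy T \<rho>"
    and "\<forall>V. (\<forall>n. choquet_play T \<rho> V n) \<longrightarrow> \<Inter> (range V) \<inter> D \<noteq> {}"
    and "subgroup D G"
  shows "gdelta_dense T D"
  unfolding gdelta_dense_def
proof (intro allI impI)
  fix B assume B: "gdelta_in T B \<and> B \<noteq> {}"
  then have "\<exists>C. (\<forall>n. openin T (C n)) \<and> (\<forall>n. C (Suc n) \<subseteq> C n) \<and> \<Inter> (range C) = B"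
    unfolding gdelta_in_descending by (rule conjunct1)
  then obtain C :: "nat \<Rightarrow> 'a set" where C: "\<And>n. openin T (C n)" "\<Inter> (range C) = B"
    by blast
  obtain b where "b \<in> B"
    using B by blast
  then have "b \<in> C n" for n
    using C(2) by blast
  then have "D \<inter> \<Inter> (range C) \<noteq> {}"
    by (rule topological_group_subgroup_meets_Inter[OF assms C(1)])
  then show "D \<inter> B \<noteq> {}"
    unfolding C(2) .
qed

section \<open>Dense embeddings\<close>

lemma embedding_map_imp_continuous_map: "embedding_map T S e \<Longrightarrow> continuous_map T S e"
  unfolding embedding_map_def
  using homeomorphic_imp_continuous_map continuous_map_in_subtopology by blast

lemma embedding_map_openin_iff:
  assumes "embedding_map T S e"
  shows "openin T W \<longleftrightarrow> (\<exists>V. openin S V \<and> W = topspace T \<inter> e -` V)"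
proof
  assume W: "openin T W"
  have hom: "homeomorphic_map T (subtopology S (e ` topspace T)) e"
    using assms unfolding embedding_map_def .
  then obtain V where V: "openin S V" "e ` W = V \<inter> e ` topspace T"
    using homeomorphic_map_openness W openin_subset openin_subtopology by metis
  have "W = topspace T \<inter> e -` V"
    using V(2) homeomorphic_imp_injective_map[OF hom] openin_subset[OF W]
    unfolding inj_on_def by blast
  with V(1) show "\<exists>V. openin S V \<and> W = topspace T \<inter> e -` V" by blast
next
  assume "\<exists>V. openin S V \<and> W = topspace T \<inter> e -` V"
  then obtain V where "openin S V" "W = {x \<in> topspace T. e x \<in> V}" by blast
  then show "openin T W"
    using openin_continuous_map_preimage[OF embedding_map_imp_continuous_map[OF assms]] by simp
qed

locale dense_embedding =
  fixes T :: "'a topology" and S :: "'b topology" and e :: "'a \<Rightarrow> 'b"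
  assumes embedding: "embedding_map T S e"
    and dense: "S closure_of (e ` topspace T) = topspace S"
begin

definition pullback :: "'b set \<Rightarrow> 'a set" where
  "pullback V = topspace T \<inter> e -` V"

definition extension :: "'a set \<Rightarrow> 'b set" where
  "extension W = (SOME V. openin S V \<and> pullback V = W)"

lemma openin_pullback: "openin S V \<Longrightarrow> openin T (pullback V)"
  using embedding_map_openin_iff[OF embedding] unfolding pullback_def by blast

lemma pullback_nonempty: "openin S V \<Longrightarrow> V \<noteq> {} \<Longrightarrow> pullback V \<noteq> {}"
  using dense unfolding dense_intersects_open pullback_def by blast

lemma pullback_Int: "pullback (A \<inter> B) = pullback A \<inter> pullback B"
  unfolding pullback_def by auto

lemma pullback_mono: "A \<subseteq> B \<Longrightarrow> pullback A \<subseteq> pullback B"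
  unfolding pullback_def by auto

lemma
  assumes "openin T W"
  shows openin_extension: "openin S (extension W)"
    and pullback_extension: "pullback (extension W) = W"
proof -
  have "\<exists>V. openin S V \<and> pullback V = W"
    using embedding_map_openin_iff[OF embedding] assms unfolding pullback_def by metis
  then show "openin S (extension W)" "pullback (extension W) = W"
    unfolding extension_def by (metis (mono_tags, lifting) someI_ex)+
qed

definition lift_strategy :: "('a set list \<Rightarrow> 'a set) \<Rightarrow> 'b set list \<Rightarrow> 'b set" where
  "lift_strategy \<sigma> hs = extension (\<sigma> (map pullback hs)) \<inter> last hs"

lemma lift_strategy_play:
  "lift_strategy \<sigma> (map V [0..<2*n+1]) = extension (\<sigma> (map (pullback \<circ> V) [0..<2*n+1])) \<inter> V (2*n)"
  by (simp add: lift_strategy_def del: upt_Suc) (simp add: last_map)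

lemma choquet_play_pullback_lift_strategy:
  assumes \<sigma>: "choquet_strategy T \<sigma>" and "choquet_play S (lift_strategy \<sigma>) V n"
  shows "choquet_play T \<sigma> (pullback \<circ> V) n"
  using assms(2)
proof (induction n)
  case 0
  then show ?case using openin_pullback pullback_nonempty by (simp add: choquet_play_0)
next
  case (Suc n)
  have S: "choquet_play S (lift_strategy \<sigma>) V n" "V (2*n+1) = lift_strategy \<sigma> (map V [0..<2*n+1])"
    "openin S (V (2*n+2))" "V (2*n+2) \<noteq> {}" "V (2*n+2) \<subseteq> V (2*n+1)"
    using Suc.prems unfolding choquet_play_Suc by auto
  then have play: "choquet_play T \<sigma> (pullback \<circ> V) n" using Suc.IH by blast
  define W where "W = \<sigma> (map (pullback \<circ> V) [0..<2*n+1])"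
  have "pullback (V (2*n+1)) = pullback (extension W) \<inter> pullback (V (2*n))"
    unfolding S(2) lift_strategy_play W_def[symmetric] pullback_Int ..
  also have "\<dots> = W"
    using pullback_extension choquet_strategyD[OF \<sigma> play] unfolding W_def by auto
  finally have "(pullback \<circ> V) (2*n+1) = \<sigma> (map (pullback \<circ> V) [0..<2*n+1])"
    unfolding W_def by simp
  then show ?case
    using play openin_pullback[OF S(3)] pullback_nonempty[OF S(3,4)] pullback_mono[OF S(5)]
    unfolding choquet_play_Suc by simp
qed

lemma choquet_strategy_lift_strategy:
  assumes \<sigma>: "choquet_strategy T \<sigma>"
  shows "choquet_strategy S (lift_strategy \<sigma>)"
  unfolding choquet_strategy_def
proof (intro allI impI conjI)
  fix V n assume play: "choquet_play S (lift_strategy \<sigma>) V n"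
  define W where "W = \<sigma> (map (pullback \<circ> V) [0..<2*n+1])"
  have W: "openin T W" "W \<noteq> {}" "W \<subseteq> pullback (V (2*n))"
    using choquet_strategyD[OF \<sigma> choquet_play_pullback_lift_strategy[OF \<sigma> play]] unfolding W_def
    by auto
  have "openin S (V (2*n))"
    using play unfolding choquet_play_def by blast
  then show "openin S (lift_strategy \<sigma> (map V [0..<2*n+1]))"
    unfolding lift_strategy_play W_def[symmetric] using openin_extension[OF W(1)] by blast
  have "pullback (lift_strategy \<sigma> (map V [0..<2*n+1])) = W"
    unfolding lift_strategy_play W_def[symmetric] pullback_Int pullback_extension[OF W(1)] using W(3) by blast
  then show "lift_strategy \<sigma> (map V [0..<2*n+1]) \<noteq> {}"
    using W(2) unfolding pullback_def by blast
  show "lift_strategy \<sigma> (map V [0..<2*n+1]) \<subseteq> V (2*n)"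
    unfolding lift_strategy_play by blast
qed

lemma lift_strategy_outcome_meets_image:
  assumes \<sigma>: "choquet_strategy T \<sigma>"
    and win: "\<forall>U. (\<forall>n. choquet_play T \<sigma> U n) \<longrightarrow> \<Inter> (range U) \<noteq> {}"
    and complete: "\<forall>n. choquet_play S (lift_strategy \<sigma>) V n"
  shows "\<Inter> (range V) \<inter> e ` topspace T \<noteq> {}"
proof -
  obtain x where "x \<in> \<Inter> (range (pullback \<circ> V))"
    using win choquet_play_pullback_lift_strategy[OF \<sigma>] complete by blast
  then show ?thesis
    unfolding pullback_def by auto
qed


definition extend_move :: "(nat \<Rightarrow> 'a set) \<Rightarrow> 'b set list \<Rightarrow> 'b set" where
  "extend_move U hs =
     (if hs = [] then extension (U 0) else extension (U (length hs)) \<inter> last hs)"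

definition lift_play :: "('b set list \<Rightarrow> 'b set) \<Rightarrow> (nat \<Rightarrow> 'a set) \<Rightarrow> nat \<Rightarrow> 'b set" where
  "lift_play \<rho> U = choquet_run_seq (extend_move U) \<rho>"

definition pullback_strategy :: "('b set list \<Rightarrow> 'b set) \<Rightarrow> 'a set list \<Rightarrow> 'a set" where
  "pullback_strategy \<rho> xs = pullback (lift_play \<rho> ((!) xs) (length xs))"

lemma lift_play_0: "lift_play \<rho> U 0 = extension (U 0)"
  using choquet_run_seq_even[of "extend_move U" \<rho> 0] unfolding lift_play_def extend_move_def by simp

lemma lift_play_odd: "lift_play \<rho> U (2*k+1) = \<rho> (map (lift_play \<rho> U) [0..<2*k+1])"
  unfolding lift_play_def by (rule choquet_run_seq_odd)

lemma lift_play_even: "lift_play \<rho> U (2*k+2) = extension (U (2*k+2)) \<inter> lift_play \<rho> U (2*k+1)"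
  using choquet_run_seq_even[of "extend_move U" \<rho> "Suc k"] unfolding lift_play_def extend_move_def
  by (simp del: upt_Suc) (simp add: last_map)

lemma pullback_strategy_play: "pullback_strategy \<rho> (map U [0..<2*k+1]) = pullback (lift_play \<rho> U (2*k+1))"
proof -
  have "extend_move ((!) (map U [0..<2*k+1])) hs = extend_move U hs"
    if "length hs \<le> 2*k+1" "even (length hs)" for hs
  proof -
    have "length hs < 2*k+1" using that by presburger
    then show ?thesis unfolding extend_move_def by (simp del: upt_Suc)
  qed
  then show ?thesis
    unfolding pullback_strategy_def lift_play_def by (simp del: upt_Suc) (rule arg_cong[OF choquet_run_seq_cong])
qed

lemma choquet_play_lift_play:
  assumes \<rho>: "choquet_strategy S \<rho>" and "choquet_play T (pullback_strategy \<rho>) U n"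
  shows "choquet_play S \<rho> (lift_play \<rho> U) n \<and> (\<forall>i\<le>2*n. pullback (lift_play \<rho> U i) = U i)"
  using assms(2)
proof (induction n)
  case 0
  then have U0: "openin T (U 0)" "U 0 \<noteq> {}"
    unfolding choquet_play_0 by auto
  then have pullback_0: "pullback (lift_play \<rho> U 0) = U 0"
    unfolding lift_play_0 by (intro pullback_extension)
  moreover have "openin S (lift_play \<rho> U 0)"
    unfolding lift_play_0 using U0(1) by (rule openin_extension)
  moreover have "lift_play \<rho> U 0 \<noteq> {}"
    using pullback_0 U0(2) unfolding pullback_def by auto
  ultimately show ?case
    unfolding choquet_play_0 by simp
next
  case (Suc n)
  have T: "choquet_play T (pullback_strategy \<rho>) U n"
    "U (2*n+1) = pullback_strategy \<rho> (map U [0..<2*n+1])"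
    "openin T (U (2*n+2))" "U (2*n+2) \<noteq> {}" "U (2*n+2) \<subseteq> U (2*n+1)"
    using Suc.prems unfolding choquet_play_Suc by auto
  then have S: "choquet_play S \<rho> (lift_play \<rho> U) n"
    and pullback_lift: "\<forall>i\<le>2*n. pullback (lift_play \<rho> U i) = U i"
    using Suc.IH by auto
  have odd: "openin S (lift_play \<rho> U (2*n+1))"
    using choquet_strategyD(1)[OF \<rho> S] lift_play_odd by simp
  have pullback_odd: "pullback (lift_play \<rho> U (2*n+1)) = U (2*n+1)"
    using T(2) pullback_strategy_play by simp
  have pullback_even: "pullback (lift_play \<rho> U (2*n+2)) = U (2*n+2)"
    using T(5) unfolding lift_play_even pullback_Int pullback_extension[OF T(3)] pullback_odd by blast
  have "openin S (lift_play \<rho> U (2*n+2))"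
    unfolding lift_play_even using openin_extension[OF T(3)] odd by blast
  moreover have "lift_play \<rho> U (2*n+2) \<noteq> {}"
    using pullback_even T(4) unfolding pullback_def by auto
  moreover have "lift_play \<rho> U (2*n+2) \<subseteq> lift_play \<rho> U (2*n+1)"
    unfolding lift_play_even by blast
  ultimately have "choquet_play S \<rho> (lift_play \<rho> U) (Suc n)"
    unfolding choquet_play_Suc using S lift_play_odd by blast
  moreover have "\<forall>i\<le>2 * Suc n. pullback (lift_play \<rho> U i) = U i"
    using pullback_lift pullback_odd pullback_even by (auto simp: le_Suc_eq)
  ultimately show ?case by blast
qed

lemma choquet_strategy_pullback_strategy:
  assumes \<rho>: "choquet_strategy S \<rho>"
  shows "choquet_strategy T (pullback_strategy \<rho>)"
  unfolding choquet_strategy_def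
proof (intro allI impI conjI)
  fix U n assume "choquet_play T (pullback_strategy \<rho>) U n"
  then have S: "choquet_play S \<rho> (lift_play \<rho> U) n" and pullback_even: "pullback (lift_play \<rho> U (2*n)) = U (2*n)"
    using choquet_play_lift_play[OF \<rho>] by auto
  note N = choquet_strategyD[OF \<rho> S, folded lift_play_odd]
  show "openin T (pullback_strategy \<rho> (map U [0..<2*n+1]))"
    unfolding pullback_strategy_play using openin_pullback N(1) .
  show "pullback_strategy \<rho> (map U [0..<2*n+1]) \<noteq> {}"
    unfolding pullback_strategy_play using pullback_nonempty N(1,2) .
  show "pullback_strategy \<rho> (map U [0..<2*n+1]) \<subseteq> U (2*n)"
    unfolding pullback_strategy_play using pullback_mono[OF N(3)] pullback_even by simp
qed

lemma pullback_strategy_outcome_nonempty: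
  assumes \<rho>: "choquet_strategy S \<rho>"
    and win: "\<forall>V. (\<forall>n. choquet_play S \<rho> V n) \<longrightarrow> \<Inter> (range V) \<noteq> {}"
    and gd: "gdelta_dense S (e ` topspace T)"
    and complete: "\<forall>n. choquet_play T (pullback_strategy \<rho>) U n"
  shows "\<Inter> (range U) \<noteq> {}"
proof -
  have S: "\<forall>n. choquet_play S \<rho> (lift_play \<rho> U) n"
    using choquet_play_lift_play[OF \<rho>] complete by blast
  have pullback_lift: "pullback (lift_play \<rho> U i) = U i" for i
    using choquet_play_lift_play[OF \<rho> spec[OF complete, of i]] by simp
  have "gdelta_in S (\<Inter> (range (lift_play \<rho> U)))"
    using choquet_play_infinite_openin[OF \<rho> S]
    by (intro gdelta_in_Inter open_imp_gdelta_in) blast+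
  moreover have "\<Inter> (range (lift_play \<rho> U)) \<noteq> {}"
    using win S by blast
  ultimately have "e ` topspace T \<inter> \<Inter> (range (lift_play \<rho> U)) \<noteq> {}"
    using gd unfolding gdelta_dense_def by blast
  then obtain x where "x \<in> topspace T" "\<forall>i. e x \<in> lift_play \<rho> U i"
    by blast
  then show ?thesis
    using pullback_lift unfolding pullback_def by blast
qed

lemma choquet_space_if_gdelta_dense:
  assumes "choquet_space S" "gdelta_dense S (e ` topspace T)"
  shows "choquet_space T"
  using assms choquet_strategy_pullback_strategy pullback_strategy_outcome_nonempty
  unfolding choquet_space_iff_strategy by metis

end

section \<open>Raikov completions\<close>

theorem theorem4:
  fixes G :: "('a, 'm) monoid_scheme" and T :: "'a topology"
    and H :: "('b, 'n) monoid_scheme" and S :: "'b topology" and e :: "'a \<Rightarrow> 'b"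
  assumes "topological_group G T"
    and "raikov_completion G T H S e"
  shows "choquet_space T \<longleftrightarrow> choquet_space S \<and> gdelta_dense S (e ` carrier G)"
proof -
  have tgH: "topological_group H S" and carrier: "topspace T = carrier G"
    using assms unfolding raikov_completion_def topological_group_def by auto
  interpret dense_embedding T S e
    using assms(2) carrier by unfold_locales (auto simp: raikov_completion_def)
  have "group_hom G H e"
    using topological_groupD(1)[OF assms(1)] topological_groupD(1)[OF tgH] assms(2)
    unfolding raikov_completion_def group_hom_def group_hom_axioms_def by blast
  then have sub: "subgroup (e ` topspace T) H"
    unfolding carrier by (rule group_hom.img_is_subgroup)
  show ?thesis
    unfolding carrier[symmetric]
  proof
    assume "choquet_space T"
    then obtain \<sigma> where \<sigma>: "choquet_strategy T \<sigma>"
      and win: "\<forall>U. (\<forall>n. choquet_play T \<sigma> U n) \<longrightarrow> \<Inter> (range U) \<noteq> {}"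
      unfolding choquet_space_iff_strategy by blast
    have meet: "\<forall>V. (\<forall>n. choquet_play S (lift_strategy \<sigma>) V n) \<longrightarrow>
        \<Inter> (range V) \<inter> e ` topspace T \<noteq> {}"
      using lift_strategy_outcome_meets_image[OF \<sigma> win] by blast
    have "choquet_space S"
      unfolding choquet_space_iff_strategy using choquet_strategy_lift_strategy[OF \<sigma>] meet by blast
    moreover have "gdelta_dense S (e ` topspace T)"
      using topological_group_gdelta_dense_subgroup[OF tgH choquet_strategy_lift_strategy[OF \<sigma>] meet sub] .
    ultimately show "choquet_space S \<and> gdelta_dense S (e ` topspace T)" ..
  next
    assume "choquet_space S \<and> gdelta_dense S (e ` topspace T)"
    then show "choquet_space T"
      using choquet_space_if_gdelta_dense by blast
  qed
qed

end
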